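(* Let $q$ be a prime power and $k\ge3$, $h\ge2$ integers, and $1\le u_0<u_1\le\dots\le u_h$ integers. Let $U_0,U_1,\dots,U_h$ be subspaces of $\mathbf F_q^k$ of dimensions $u_0,u_1,\dots,u_h$ with $U_i\cap U_j=U_0$ for all distinct $i,j\in\{1,\dots,h\}$, and assume $q^k-q^{k-1}>q^{u_0}-1+\sum_{i=1}^h(q^{u_i}-q^{u_0})$. Let $U$ be the set of nonzero vectors of $\mathbf F_q^k$ not in $U_1\cup\dots\cup U_h$, let $\widetilde G$ be a matrix whose columns consist of exactly one representative of each class $\{\lambda\mathbf v:\lambda\in\mathbf F_q^*\}$, $\mathbf v\in U$, and let $\mathbf C$ be the linear code with generator matrix $\widetilde G$. If $h\le q^{u_1-u_0}$, then $\mathbf C$ is a linear $\big[\frac{(q^k-q^{u_0})-\sum_{i=1}^h(q^{u_i}-q^{u_0})}{q-1},\,k,\,q^{k-1}-\sum_{i=1}^hq^{u_i-1}\big]_q$ code (its minimum distance equals $q^{k-1}-\sum_{i=1}^hq^{u_i-1}$). *)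

theory Defs
  imports "HOL-Analysis.Analysis"
begin

text \<open>A matrix over a field 'a with k rows is given by the list of its columns
  (vectors in 'a^'n, CARD('n) = k).\<close>

definition gen_code :: "('a::field ^ 'n) list \<Rightarrow> 'a list set" where
  "gen_code cols = {map (\<lambda>c. scalar_product x c) cols | x. True}"

definition hweight :: "'a::zero list \<Rightarrow> nat" where
  "hweight c = length (filter (\<lambda>a. a \<noteq> 0) c)"

definition min_dist :: "'a::zero list set \<Rightarrow> nat" where
  "min_dist C = Min {hweight c | c. c \<in> C \<and> (\<exists>a\<in>set c. a \<noteq> 0)}"

end

theory Submission
  imports Defs
begin

text \<open>
  The weight of the codeword of a message x is the number of columns off the hyperplane
  H_x = {v. x . v = 0}. Every column stands for its q - 1 nonzero multiples, so (q - 1) times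
  this weight counts the vectors outside U = U_1 \<union> ... \<union> U_h and off H_x, that is
  (q^k - q^(k-1)) - |U - H_x|. Since the sets U_i - U_0 are disjoint,
  |U - H_x| = |U_0 - H_x| + \<Sum>_i (|U_i - H_x| - |U_0 - H_x|) \<le> \<Sum>_i (q - 1) q^(u_i - 1),
  with equality when H_x contains U_0 but none of the U_i. Such an x exists because the
  annihilators of the U_i, of size q^(k - u_i) \<le> q^(k - u_1), are too few (h \<le> q^(u_1 - u_0))
  to cover the annihilator of U_0, of size q^(k - u_0). The numerical hypothesis says
  |U| - 1 < q^k - q^(k-1); it forces every nonzero message to have positive weight, so the
  encoding is injective and the code has q^k words.
\<close>

section \<open>Counting in vector spaces over a finite field\<close>

lemma scalar_product_commute: "scalar_product x y = scalar_product y (x::'a::comm_semiring_1^'n)"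
  unfolding scalar_product_def by (simp add: mult.commute)

lemma scalar_product_zero_right [simp]: "scalar_product x 0 = (0::'a::semiring_1)"
  unfolding scalar_product_def by simp

lemma scalar_product_zero_left [simp]: "scalar_product 0 x = (0::'a::semiring_1)"
  unfolding scalar_product_def by simp

lemma scalar_product_add_right:
  "scalar_product x (v + w) = scalar_product x v + scalar_product (x::'a::semiring_1^'n) w"
  unfolding scalar_product_def by (simp add: distrib_left sum.distrib)

lemma scalar_product_diff_right:
  "scalar_product x (v - w) = scalar_product x v - scalar_product (x::'a::ring_1^'n) w"
  unfolding scalar_product_def by (simp add: algebra_simps sum_subtractf)

lemma scalar_product_diff_left:
  "scalar_product (x - y) v = scalar_product x v - scalar_product (y::'a::ring_1^'n) v"
  unfolding scalar_product_def by (simp add: algebra_simps sum_subtractf)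

lemma scalar_product_scale_right:
  "scalar_product x (t *s v) = t * scalar_product (x::'a::comm_semiring_1^'n) v"
  unfolding scalar_product_def by (simp add: sum_distrib_left algebra_simps)

lemma scalar_product_axis_right: "scalar_product x (axis i 1) = (x::'a::semiring_1^'n) $ i"
  unfolding scalar_product_def axis_def by (simp add: if_distrib cong: if_cong)

text \<open>Note that \<open>hyperplane 0 = UNIV\<close>; all lemmas about it assume \<open>z \<noteq> 0\<close>.\<close>

abbreviation hyperplane :: "'a::semiring_1^'n \<Rightarrow> ('a^'n) set" where
  "hyperplane z \<equiv> {v. scalar_product z v = 0}"

abbreviation annihilator :: "('a::semiring_1^'n) set \<Rightarrow> ('a^'n) set" where
  "annihilator U \<equiv> {x. \<forall>u\<in>U. scalar_product x u = 0}"

lemma two_le_card_field: "2 \<le> CARD('a::{finite,field})"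
proof -
  have "card {0::'a, 1} \<le> CARD('a)" by (rule card_mono) auto
  then show ?thesis by simp
qed

lemma card_subspace:
  fixes U :: "('a::{finite,field}^'n) set"
  assumes "vec.subspace U"
  shows "card U = CARD('a) ^ vec.dim U"
proof -
  obtain B where B: "B \<subseteq> U" "vec.independent B" "U \<subseteq> vec.span B" "card B = vec.dim U"
    using vec.basis_exists by blast
  have span_B: "vec.span B = U"
    using B assms vec.span_minimal by blast
  let ?comb = "\<lambda>f. \<Sum>v\<in>B. f v *s v"
  have "?comb ` (B \<rightarrow>\<^sub>E UNIV) = U"
  proof -
    have "?comb f \<in> ?comb ` (B \<rightarrow>\<^sub>E UNIV)" for f
      by (rule image_eqI[of _ _ "restrict f B"]) (auto intro: sum.cong)
    then have "?comb ` (B \<rightarrow>\<^sub>E UNIV) = range ?comb" by blast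
    then show ?thesis using span_B vec.span_finite[of B] by simp
  qed
  moreover have "inj_on ?comb (B \<rightarrow>\<^sub>E UNIV)"
  proof
    fix f g assume f: "f \<in> B \<rightarrow>\<^sub>E UNIV" and g: "g \<in> B \<rightarrow>\<^sub>E UNIV" and "?comb f = ?comb g"
    then have "(\<Sum>v\<in>B. (f v - g v) *s v) = 0"
      by (simp add: vec.scale_left_diff_distrib sum_subtractf)
    then have "f v = g v" if "v \<in> B" for v
      using vec.independentD[OF B(2), of B "\<lambda>v. f v - g v"] that by simp
    then show "f = g" using f g PiE_ext by metis
  qed
  ultimately have "bij_betw ?comb (B \<rightarrow>\<^sub>E UNIV) U"
    unfolding bij_betw_def by blast
  then have "card U = card (B \<rightarrow>\<^sub>E (UNIV :: 'a set))"
    by (rule bij_betw_same_card[symmetric])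
  then show ?thesis using B(4) by (simp add: card_PiE)
qed

lemma card_subspace_eq_mult_card_kernel:
  fixes U :: "('a::{finite,field}^'n) set"
  assumes U: "vec.subspace U" and "w \<in> U" and "scalar_product x w \<noteq> 0"
  shows "card U = CARD('a) * card {v\<in>U. scalar_product x v = 0}"
proof -
  let ?fibre = "\<lambda>a. {v\<in>U. scalar_product x v = a}"
  have fibres: "card (?fibre a) = card (?fibre 0)" for a
  proof -
    define t where "t = (a / scalar_product x w) *s w"
    have t: "t \<in> U" "scalar_product x t = a"
      unfolding t_def using assms by (simp_all add: vec.subspace_scale scalar_product_scale_right)
    have "bij_betw (\<lambda>v. v - t) (?fibre a) (?fibre 0)"
    proof (rule bij_betw_byWitness[where f' = "\<lambda>v. v + t"])
      show "(\<lambda>v. v - t) ` ?fibre a \<subseteq> ?fibre 0"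
        using t U by (auto simp: scalar_product_diff_right vec.subspace_diff)
      show "(\<lambda>v. v + t) ` ?fibre 0 \<subseteq> ?fibre a"
        using t U by (auto simp: scalar_product_add_right vec.subspace_add)
    qed simp_all
    then show ?thesis by (rule bij_betw_same_card)
  qed
  have "U = (\<Union>a. ?fibre a)" by blast
  also have "card \<dots> = (\<Sum>a\<in>UNIV. card (?fibre a))"
    by (rule card_UN_disjoint) auto
  also have "\<dots> = (\<Sum>a\<in>(UNIV :: 'a set). card (?fibre 0))"
    by (rule sum.cong[OF refl], rule fibres)
  finally show ?thesis by simp
qed

lemma card_hyperplane:
  fixes z :: "'a::{finite,field}^'n"
  assumes "z \<noteq> 0"
  shows "card (hyperplane z) = CARD('a) ^ (CARD('n) - 1)"
proof -
  obtain i where "z $ i \<noteq> 0" using assms by (metis vec_eq_iff zero_index)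
  then have "CARD('a) ^ CARD('n) = CARD('a) * card (hyperplane z)"
    using card_subspace_eq_mult_card_kernel[of UNIV "axis i 1" z]
    by (simp add: scalar_product_axis_right)
  also have "CARD('a) ^ CARD('n) = CARD('a) * CARD('a) ^ (CARD('n) - 1)"
    by (simp flip: power_Suc)
  finally show ?thesis by simp
qed

lemma card_subspace_diff_hyperplane:
  fixes U :: "('a::{finite,field}^'n) set"
  assumes U: "vec.subspace U" and "\<not> U \<subseteq> hyperplane z"
  shows "card (U - hyperplane z) = (CARD('a) - 1) * CARD('a) ^ (vec.dim U - 1)"
proof -
  let ?q = "CARD('a)" and ?K = "{v\<in>U. scalar_product z v = 0}"
  obtain w where "w \<in> U" "scalar_product z w \<noteq> 0" using assms by blast
  then have kernel: "card U = ?q * card ?K"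
    by (rule card_subspace_eq_mult_card_kernel[OF U])
  obtain d where d: "vec.dim U = Suc d"
  proof (cases "vec.dim U")
    case 0
    then have "card U = 1" using card_subspace[OF U] by simp
    then have "?q * card ?K = 1" using kernel by simp
    then show ?thesis using two_le_card_field[where 'a='a] by simp
  qed
  then have "?q * card ?K = ?q * ?q ^ (vec.dim U - 1)"
    using kernel card_subspace[OF U] by simp
  then have "card ?K = ?q ^ (vec.dim U - 1)" by simp
  moreover have "U - hyperplane z = U - ?K" by blast
  ultimately show ?thesis
    using kernel by (simp add: card_Diff_subset diff_mult_distrib)
qed

lemma card_subspace_diff_hyperplane_le:
  fixes U :: "('a::{finite,field}^'n) set"
  assumes "vec.subspace U"
  shows "card (U - hyperplane z) \<le> (CARD('a) - 1) * CARD('a) ^ (vec.dim U - 1)"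
proof (cases "U \<subseteq> hyperplane z")
  case True
  then have "U - hyperplane z = {}" by blast
  then show ?thesis by (metis card.empty le0)
next
  case False
  then show ?thesis using card_subspace_diff_hyperplane[OF assms] by simp
qed

lemma card_annihilator:
  fixes U :: "('a::{finite,field}^'n) set"
  assumes U: "vec.subspace U"
  shows "card (annihilator U) = CARD('a) ^ (CARD('n) - vec.dim U)"
proof -
  let ?q = "CARD('a)" and ?N = "CARD('a) ^ CARD('n)" and ?A = "annihilator U"
  have q: "2 \<le> ?q" by (rule two_le_card_field)
  have per_vector: "?q * card {x. scalar_product x w = 0} = ?N + (if w = 0 then (?q - 1) * ?N else 0)"
    for w :: "'a^'n"
  proof (cases "w = 0")
    case True
    then show ?thesis using q by (simp add: diff_mult_distrib)
  next
    case False
    have "{x. scalar_product x w = 0} = hyperplane w" by (simp add: scalar_product_commute)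
    then show ?thesis using card_hyperplane[OF False] False by (simp flip: power_Suc)
  qed
  have per_functional:
    "?q * card {w\<in>U. scalar_product x w = 0} = card U + (if x \<in> ?A then (?q - 1) * card U else 0)"
    for x
  proof (cases "x \<in> ?A")
    case True
    then have "{w\<in>U. scalar_product x w = 0} = U" by blast
    then show ?thesis using True q by (simp add: diff_mult_distrib)
  next
    case False
    then obtain w where "w \<in> U" "scalar_product x w \<noteq> 0" by blast
    then have "card U = ?q * card {w\<in>U. scalar_product x w = 0}"
      by (rule card_subspace_eq_mult_card_kernel[OF U])
    then show ?thesis unfolding if_not_P[OF False] by simp
  qed
  \<comment> \<open>double counting of the pairs \<open>(x, w) \<in> UNIV \<times> U\<close> with \<open>x \<bullet> w = 0\<close>\<close>
  have "(\<Sum>w\<in>U. card {x\<in>UNIV. scalar_product x w = 0}) = (\<Sum>x\<in>UNIV. card {w\<in>U. scalar_product x w = 0})"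
    by (rule sum_multicount_gen) auto
  then have "(\<Sum>w\<in>U. ?q * card {x. scalar_product x w = 0}) = (\<Sum>x\<in>UNIV. ?q * card {w\<in>U. scalar_product x w = 0})"
    by (simp flip: sum_distrib_left)
  then have "card U * ?N + (?q - 1) * ?N = ?N * card U + (?q - 1) * card U * card ?A"
    using vec.subspace_0[OF U] unfolding per_vector per_functional
    by (simp add: sum.distrib sum.If_cases ac_simps)
  then have "card ?A * card U = ?N" using q by simp
  moreover have "?N = ?q ^ (CARD('n) - vec.dim U) * ?q ^ vec.dim U"
    using dim_subset_UNIV_cart_gen[of U] by (simp flip: power_add)
  ultimately show ?thesis using card_subspace[OF U] q by simp
qed

lemma card_eq_mult_card_representatives:
  fixes S reps :: "('a::{finite,field}^'n) set"
  assumes S_scale: "\<And>v t. v \<in> S \<Longrightarrow> t \<noteq> 0 \<Longrightarrow> t *s v \<in> S" and "0 \<notin> S"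
    and reps: "reps \<subseteq> S"
    and unique: "\<And>v. v \<in> S \<Longrightarrow> card {c \<in> reps. \<exists>t. t \<noteq> 0 \<and> c = t *s v} = 1"
    and P: "\<And>v t. t \<noteq> 0 \<Longrightarrow> P (t *s v) \<longleftrightarrow> P v"
  shows "card {v\<in>S. P v} = (CARD('a) - 1) * card {c\<in>reps. P c}"
proof -
  let ?R = "\<lambda>c v. \<exists>t. t \<noteq> 0 \<and> c = t *s v"
  let ?S = "{v\<in>S. P v}" and ?C = "{c\<in>reps. P c}"
  have orbit: "card {v\<in>?S. ?R c v} = CARD('a) - 1" if c: "c \<in> ?C" for c
  proof -
    have "c \<in> S" "P c" "c \<noteq> 0" using c reps \<open>0 \<notin> S\<close> by auto
    have "{v\<in>?S. ?R c v} = (\<lambda>s. s *s c) ` (UNIV - {0})"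
    proof (intro equalityI subsetI)
      fix v assume "v \<in> {v\<in>?S. ?R c v}"
      then obtain t where "t \<noteq> 0" "c = t *s v" by blast
      then have "v = inverse t *s c" "inverse t \<noteq> 0" by simp_all
      then show "v \<in> (\<lambda>s. s *s c) ` (UNIV - {0})" by blast
    next
      fix v assume "v \<in> (\<lambda>s. s *s c) ` (UNIV - {0})"
      then obtain s where s: "s \<noteq> 0" "v = s *s c" by blast
      then have "?R c v" using s(1) by (intro exI[of _ "inverse s"]) simp
      moreover have "v \<in> S" "P v" using s S_scale P \<open>c \<in> S\<close> \<open>P c\<close> by auto
      ultimately show "v \<in> {v\<in>?S. ?R c v}" by blast
    qed
    moreover have "inj_on (\<lambda>s. s *s c) (UNIV - {0})"
      using \<open>c \<noteq> 0\<close> by (auto simp: inj_on_def)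
    ultimately show ?thesis by (simp add: card_image card_Diff_singleton)
  qed
  have "(\<Sum>c\<in>?C. card {v\<in>?S. ?R c v}) = 1 * card ?S"
  proof (rule sum_multicount)
    show "\<forall>v\<in>?S. card {c\<in>?C. ?R c v} = 1"
    proof
      fix v assume v: "v \<in> ?S"
      then have "{c\<in>?C. ?R c v} = {c\<in>reps. ?R c v}" using P by auto
      then show "card {c\<in>?C. ?R c v} = 1" using unique v by simp
    qed
  qed auto
  then show ?thesis using orbit by (simp add: mult.commute)
qed

lemma card_sunflower_diff:
  fixes U :: "nat \<Rightarrow> 'b set"
  assumes fin: "\<And>i. i \<le> h \<Longrightarrow> finite (U i)"
    and kernel: "\<And>i. i \<in> {1..h} \<Longrightarrow> U 0 \<subseteq> U i"
    and petals: "\<And>i j. i \<in> {1..h} \<Longrightarrow> j \<in> {1..h} \<Longrightarrow> i \<noteq> j \<Longrightarrow> U i \<inter> U j = U 0"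
    and "1 \<le> h"
  shows "int (card ((\<Union>i\<in>{1..h}. U i) - X)) =
           int (card (U 0 - X)) + (\<Sum>i=1..h. int (card (U i - X)) - int (card (U 0 - X)))"
proof -
  have "(\<Union>i\<in>{1..h}. U i) - X = (U 0 - X) \<union> (\<Union>i\<in>{1..h}. U i - U 0 - X)"
    using kernel[of 1] \<open>1 \<le> h\<close> by force
  also have "card \<dots> = card (U 0 - X) + card (\<Union>i\<in>{1..h}. U i - U 0 - X)"
    by (rule card_Un_disjoint) (use fin in auto)
  also have "card (\<Union>i\<in>{1..h}. U i - U 0 - X) = (\<Sum>i=1..h. card (U i - U 0 - X))"
  proof (rule card_UN_disjoint)
    show "\<forall>i\<in>{1..h}. \<forall>j\<in>{1..h}. i \<noteq> j \<longrightarrow> (U i - U 0 - X) \<inter> (U j - U 0 - X) = {}"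
      using petals by blast
  qed (use fin in auto)
  finally have "int (card ((\<Union>i\<in>{1..h}. U i) - X)) =
      int (card (U 0 - X)) + (\<Sum>i=1..h. int (card (U i - U 0 - X)))"
    by simp
  moreover have "int (card (U i - U 0 - X)) = int (card (U i - X)) - int (card (U 0 - X))"
    if "i \<in> {1..h}" for i
  proof -
    have "U 0 - X \<subseteq> U i - X" "U i - U 0 - X = (U i - X) - (U 0 - X)"
      using kernel[OF that] by auto
    then show ?thesis using fin that by (simp add: card_Diff_subset card_mono finite_subset)
  qed
  ultimately show ?thesis by simp
qed

section \<open>Linear codes given by their columns\<close>

definition codeword_weight :: "('a::field^'n) list \<Rightarrow> 'a^'n \<Rightarrow> nat" where
  "codeword_weight cols x = card {c \<in> set cols. scalar_product x c \<noteq> 0}"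

lemma gen_code_eq_range: "gen_code cols = range (\<lambda>x. map (scalar_product x) cols)"
  unfolding gen_code_def by auto

lemma hweight_codeword:
  assumes "distinct cols"
  shows "hweight (map (scalar_product x) cols) = codeword_weight cols x"
proof -
  have "hweight (map (scalar_product x) cols) = length (filter (\<lambda>c. scalar_product x c \<noteq> 0) cols)"
    unfolding hweight_def by (simp add: filter_map o_def)
  also have "\<dots> = codeword_weight cols x"
    unfolding codeword_weight_def using distinct_card[OF distinct_filter[OF assms]] by simp
  finally show ?thesis .
qed

lemma card_gen_code:
  fixes cols :: "('a::{finite,field}^'n) list"
  assumes "\<And>x. x \<noteq> 0 \<Longrightarrow> 0 < codeword_weight cols x"
  shows "card (gen_code cols) = CARD('a) ^ CARD('n)"
proof -
  have "inj (\<lambda>x. map (scalar_product x) cols)"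
  proof
    fix x y assume "map (scalar_product x) cols = map (scalar_product y) cols"
    then have "codeword_weight cols (x - y) = 0"
      unfolding codeword_weight_def by (simp add: scalar_product_diff_left)
    then show "x = y" using assms[of "x - y"] by auto
  qed
  then show ?thesis unfolding gen_code_eq_range by (simp add: card_image)
qed

lemma min_dist_gen_code_eqI:
  fixes cols :: "('a::{finite,field}^'n) list"
  assumes "distinct cols" and x0: "codeword_weight cols x0 = d" and "0 < d"
    and lower: "\<And>x. x \<noteq> 0 \<Longrightarrow> d \<le> codeword_weight cols x"
  shows "min_dist (gen_code cols) = d"
proof -
  let ?cw = "\<lambda>x. map (scalar_product x) cols"
  have weight: "hweight (?cw x) = codeword_weight cols x" for x
    by (rule hweight_codeword[OF assms(1)])
  have nonzero: "(\<exists>a\<in>set (?cw x). a \<noteq> 0) \<longleftrightarrow> 0 < codeword_weight cols x" for x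
    by (auto simp: codeword_weight_def card_gt_0_iff)
  have "{hweight c | c. c \<in> gen_code cols \<and> (\<exists>a\<in>set c. a \<noteq> 0)} =
        {codeword_weight cols x | x. 0 < codeword_weight cols x}"
  proof (intro equalityI subsetI)
    fix w assume "w \<in> {hweight c | c. c \<in> gen_code cols \<and> (\<exists>a\<in>set c. a \<noteq> 0)}"
    then obtain x where "w = hweight (?cw x)" "\<exists>a\<in>set (?cw x). a \<noteq> 0"
      unfolding gen_code_eq_range by blast
    then show "w \<in> {codeword_weight cols x | x. 0 < codeword_weight cols x}"
      unfolding weight nonzero by blast
  next
    fix w assume "w \<in> {codeword_weight cols x | x. 0 < codeword_weight cols x}"
    then obtain x where "w = hweight (?cw x)" "\<exists>a\<in>set (?cw x). a \<noteq> 0"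
      unfolding weight nonzero by blast
    then show "w \<in> {hweight c | c. c \<in> gen_code cols \<and> (\<exists>a\<in>set c. a \<noteq> 0)}"
      unfolding gen_code_eq_range by blast
  qed
  moreover have "Min {codeword_weight cols x | x. 0 < codeword_weight cols x} = d"
  proof (rule Min_eqI)
    show "finite {codeword_weight cols x | x. 0 < codeword_weight cols x}" by simp
    show "d \<in> {codeword_weight cols x | x. 0 < codeword_weight cols x}" using x0 \<open>0 < d\<close> by blast
    fix w assume "w \<in> {codeword_weight cols x | x. 0 < codeword_weight cols x}"
    then obtain x where w: "w = codeword_weight cols x" "0 < w" by blast
    then have "x \<noteq> 0" by (auto simp: codeword_weight_def)
    then show "d \<le> w" using lower w by simp
  qed
  ultimately show ?thesis unfolding min_dist_def by simp
qed

section \<open>The code of the complement of a sunflower of subspaces\<close>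

locale sunflower_complement_code =
  fixes Us :: "nat \<Rightarrow> ('a::{finite,field}^'n) set" and u :: "nat \<Rightarrow> nat" and h :: nat
    and cols :: "('a^'n) list"
  assumes subspace: "\<And>i. i \<le> h \<Longrightarrow> vec.subspace (Us i)"
    and dim: "\<And>i. i \<le> h \<Longrightarrow> vec.dim (Us i) = u i"
    and kernel: "\<And>i. i \<in> {1..h} \<Longrightarrow> Us 0 \<subseteq> Us i"
    and petals: "\<And>i j. i \<in> {1..h} \<Longrightarrow> j \<in> {1..h} \<Longrightarrow> i \<noteq> j \<Longrightarrow> Us i \<inter> Us j = Us 0"
    and h_pos: "1 \<le> h"
    and cols_distinct: "distinct cols"
    and cols_subset: "set cols \<subseteq> {v. v \<noteq> 0 \<and> v \<notin> (\<Union>i\<in>{1..h}. Us i)}"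
    and cols_rep: "\<And>v. v \<noteq> 0 \<and> v \<notin> (\<Union>i\<in>{1..h}. Us i) \<Longrightarrow>
                     card {c \<in> set cols. \<exists>t. t \<noteq> 0 \<and> c = t *s v} = 1"
begin

abbreviation U_union :: "('a^'n) set" where
  "U_union \<equiv> \<Union>i\<in>{1..h}. Us i"

lemma zero_in_U_union: "0 \<in> U_union"
  using vec.subspace_0[OF subspace[of 1]] h_pos by auto

lemma card_outside_U_union_eq_mult_card_cols:
  assumes "\<And>v t. t \<noteq> 0 \<Longrightarrow> P (t *s v) \<longleftrightarrow> P v"
  shows "card {v \<in> - U_union. P v} = (CARD('a) - 1) * card {c \<in> set cols. P c}"
proof (rule card_eq_mult_card_representatives)
  show "t *s v \<in> - U_union" if "v \<in> - U_union" "t \<noteq> 0" for v and t :: 'a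
  proof
    assume "t *s v \<in> U_union"
    then obtain i where i: "i \<in> {1..h}" "t *s v \<in> Us i" by blast
    moreover have "vec.subspace (Us i)" using i subspace by simp
    ultimately have "inverse t *s (t *s v) \<in> Us i" using vec.subspace_scale by blast
    then show False using that i by auto
  qed
  show "0 \<notin> - U_union" using zero_in_U_union by simp
  show "set cols \<subseteq> - U_union" using cols_subset by auto
  show "card {c \<in> set cols. \<exists>t. t \<noteq> 0 \<and> c = t *s v} = 1" if "v \<in> - U_union" for v
  proof (rule cols_rep)
    show "v \<noteq> 0 \<and> v \<notin> U_union" using that zero_in_U_union by auto
  qed
qed (use assms in simp)

lemma card_U_union_diff:
  "int (card (U_union - X)) =
     int (card (Us 0 - X)) + (\<Sum>i=1..h. int (card (Us i - X)) - int (card (Us 0 - X)))"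
  by (rule card_sunflower_diff) (use kernel petals h_pos in auto)

lemma card_U_union:
  "int (card U_union) = int CARD('a) ^ u 0 + (\<Sum>i=1..h. int CARD('a) ^ u i - int CARD('a) ^ u 0)"
proof -
  have "int (card (Us i)) = int CARD('a) ^ u i" if "i \<le> h" for i
    using card_subspace[OF subspace[OF that]] dim[OF that] by simp
  then show ?thesis using card_U_union_diff[of "{}"] by simp
qed

lemma length_cols_eq:
  "real (length cols) =
     ((real CARD('a) ^ CARD('n) - real CARD('a) ^ u 0)
       - (\<Sum>i=1..h. real CARD('a) ^ u i - real CARD('a) ^ u 0)) / (real CARD('a) - 1)"
proof -
  let ?q = "CARD('a)"
  have "card {v \<in> - U_union. True} = (?q - 1) * card {c \<in> set cols. True}"
    by (rule card_outside_U_union_eq_mult_card_cols) simp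
  moreover have "{v \<in> - U_union. True} = UNIV - U_union" "{c \<in> set cols. True} = set cols"
    by auto
  ultimately have "real ((?q - 1) * length cols) = real (?q ^ CARD('n) - card U_union)"
    using distinct_card[OF cols_distinct] by (simp add: card_Diff_subset)
  moreover have "card U_union \<le> ?q ^ CARD('n)"
    using card_mono[of UNIV U_union] by simp
  ultimately have "(real ?q - 1) * real (length cols) = real ?q ^ CARD('n) - real (card U_union)"
    using two_le_card_field[where 'a='a] by simp
  moreover have "real (card U_union) = real ?q ^ u 0 + (\<Sum>i=1..h. real ?q ^ u i - real ?q ^ u 0)"
    using arg_cong[OF card_U_union, of real_of_int] by simp
  ultimately show ?thesis
    using two_le_card_field[where 'a='a] by (simp add: field_simps)
qed

lemma codeword_weight_eq:
  assumes "z \<noteq> 0"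
  shows "(CARD('a) - 1) * codeword_weight cols z + card (U_union - hyperplane z) =
           (CARD('a) - 1) * CARD('a) ^ (CARD('n) - 1)"
proof -
  have "(CARD('a) - 1) * codeword_weight cols z = card {v \<in> - U_union. scalar_product z v \<noteq> 0}"
    unfolding codeword_weight_def
    by (rule card_outside_U_union_eq_mult_card_cols[symmetric]) (simp add: scalar_product_scale_right)
  also have "{v \<in> - U_union. scalar_product z v \<noteq> 0} = (UNIV - hyperplane z) - (U_union - hyperplane z)"
    by blast
  also have "card \<dots> = card (UNIV - hyperplane z) - card (U_union - hyperplane z)"
    by (rule card_Diff_subset) auto
  finally have "(CARD('a) - 1) * codeword_weight cols z =
                  card (UNIV - hyperplane z) - card (U_union - hyperplane z)" .
  moreover have "card (U_union - hyperplane z) \<le> card (UNIV - hyperplane z)"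
    by (rule card_mono) auto
  moreover have "card (UNIV - hyperplane z) = (CARD('a) - 1) * CARD('a) ^ (CARD('n) - 1)"
  proof -
    have "CARD('a) ^ CARD('n) = CARD('a) * CARD('a) ^ (CARD('n) - 1)"
      by (simp flip: power_Suc)
    then show ?thesis
      using card_hyperplane[OF assms] by (simp add: card_Diff_subset diff_mult_distrib)
  qed
  ultimately show ?thesis by simp
qed

lemma codeword_weight_pos:
  assumes "int CARD('a) ^ u 0 - 1 + (\<Sum>i=1..h. int CARD('a) ^ u i - int CARD('a) ^ u 0)
             < int CARD('a) ^ CARD('n) - int CARD('a) ^ (CARD('n) - 1)"
    and "z \<noteq> 0"
  shows "0 < codeword_weight cols z"
proof -
  let ?q = "int CARD('a)"
  have "0 \<notin> U_union - hyperplane z" by simp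
  then have "U_union - hyperplane z \<subset> U_union" using zero_in_U_union by blast
  then have "card (U_union - hyperplane z) < card U_union" by (simp add: psubset_card_mono)
  moreover have "?q ^ CARD('n) - ?q ^ (CARD('n) - 1) = (?q - 1) * ?q ^ (CARD('n) - 1)"
    by (simp add: algebra_simps flip: power_Suc)
  moreover have "int ((CARD('a) - 1) * codeword_weight cols z) + int (card (U_union - hyperplane z)) =
                   int ((CARD('a) - 1) * CARD('a) ^ (CARD('n) - 1))"
    using codeword_weight_eq[OF assms(2)] by (metis of_nat_add)
  moreover have "int ((CARD('a) - 1) * CARD('a) ^ (CARD('n) - 1)) = (?q - 1) * ?q ^ (CARD('n) - 1)"
    using two_le_card_field[where 'a='a] by simp
  ultimately have "0 < int ((CARD('a) - 1) * codeword_weight cols z)"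
    using assms(1) card_U_union by linarith
  then show ?thesis by (simp del: of_nat_mult)
qed

lemma codeword_weight_eq_sunflower:
  assumes "z \<noteq> 0"
  shows "(int CARD('a) - 1) * int (codeword_weight cols z) =
           (int CARD('a) - 1) * int CARD('a) ^ (CARD('n) - 1) - int (card (Us 0 - hyperplane z))
           - (\<Sum>i=1..h. int (card (Us i - hyperplane z)) - int (card (Us 0 - hyperplane z)))"
proof -
  have "int ((CARD('a) - 1) * codeword_weight cols z) + int (card (U_union - hyperplane z)) =
          int ((CARD('a) - 1) * CARD('a) ^ (CARD('n) - 1))"
    using codeword_weight_eq[OF assms] by (metis of_nat_add)
  then show ?thesis
    using card_U_union_diff[of "hyperplane z"] two_le_card_field[where 'a='a]
    by simp
qed

lemma card_petal_diff_hyperplane_le: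
  assumes "i \<le> h"
  shows "int (card (Us i - hyperplane z)) \<le> (int CARD('a) - 1) * int CARD('a) ^ (u i - 1)"
proof -
  have "card (Us i - hyperplane z) \<le> (CARD('a) - 1) * CARD('a) ^ (u i - 1)"
    using card_subspace_diff_hyperplane_le[OF subspace[OF assms]] dim[OF assms] by simp
  then have "int (card (Us i - hyperplane z)) \<le> int ((CARD('a) - 1) * CARD('a) ^ (u i - 1))"
    by (simp only: of_nat_le_iff)
  also have "\<dots> = (int CARD('a) - 1) * int CARD('a) ^ (u i - 1)"
    using two_le_card_field[where 'a='a] by simp
  finally show ?thesis .
qed

lemma codeword_weight_ge:
  assumes "z \<noteq> 0"
  shows "int CARD('a) ^ (CARD('n) - 1) - (\<Sum>i=1..h. int CARD('a) ^ (u i - 1))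
           \<le> int (codeword_weight cols z)"
proof -
  let ?q = "int CARD('a)" and ?a = "\<lambda>i. int (card (Us i - hyperplane z))"
  have "?a 0 \<le> int h * ?a 0"
    using h_pos by (simp add: mult_right_mono[of 1 "int h" "?a 0", simplified])
  then have "?a 0 + (\<Sum>i=1..h. ?a i - ?a 0) \<le> (\<Sum>i=1..h. ?a i)"
    by (simp add: sum_subtractf)
  also have "\<dots> \<le> (\<Sum>i=1..h. (?q - 1) * ?q ^ (u i - 1))"
    by (rule sum_mono, rule card_petal_diff_hyperplane_le) simp
  finally have "(?q - 1) * ?q ^ (CARD('n) - 1) - (?q - 1) * (\<Sum>i=1..h. ?q ^ (u i - 1))
                  \<le> (?q - 1) * int (codeword_weight cols z)"
    using codeword_weight_eq_sunflower[OF assms] by (simp add: sum_distrib_left)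
  then show ?thesis
    using two_le_card_field[where 'a='a] by (simp flip: right_diff_distrib)
qed

lemma codeword_weight_eq_if_kernel:
  assumes "z \<noteq> 0" and "Us 0 \<subseteq> hyperplane z" and "\<forall>i\<in>{1..h}. \<not> Us i \<subseteq> hyperplane z"
  shows "int (codeword_weight cols z) = int CARD('a) ^ (CARD('n) - 1) - (\<Sum>i=1..h. int CARD('a) ^ (u i - 1))"
proof -
  let ?q = "int CARD('a)"
  have empty: "card (Us 0 - hyperplane z) = 0"
    using assms(2) by (metis Diff_eq_empty_iff card.empty)
  have petal: "int (card (Us i - hyperplane z)) = (?q - 1) * ?q ^ (u i - 1)" if "i \<in> {1..h}" for i
    using card_subspace_diff_hyperplane[OF subspace bspec[OF assms(3) that]] dim that two_le_card_field[where 'a='a]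
    by simp
  have "(?q - 1) * int (codeword_weight cols z) = (?q - 1) * (?q ^ (CARD('n) - 1) - (\<Sum>i=1..h. ?q ^ (u i - 1)))"
    using codeword_weight_eq_sunflower[OF assms(1)] unfolding empty
    by (simp add: petal sum_distrib_left right_diff_distrib)
  then show ?thesis
    using two_le_card_field[where 'a='a] by simp
qed

lemma ex_hyperplane_meeting_only_kernel:
  assumes "2 \<le> h" and "u 0 < u 1" and u_min: "\<And>i. i \<in> {1..h} \<Longrightarrow> u 1 \<le> u i"
    and h_le: "h \<le> CARD('a) ^ (u 1 - u 0)"
  shows "\<exists>z. z \<noteq> 0 \<and> Us 0 \<subseteq> hyperplane z \<and> (\<forall>i\<in>{1..h}. \<not> Us i \<subseteq> hyperplane z)"
proof (rule ccontr)
  let ?q = "CARD('a)" and ?n = "CARD('n)" and ?A = "\<lambda>i. annihilator (Us i)"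
  let ?Q = "?q ^ (?n - u 1)"
  have q: "2 \<le> ?q" by (rule two_le_card_field)
  have card_A: "card (?A i) = ?q ^ (?n - u i)" if "i \<le> h" for i
    using card_annihilator[OF subspace[OF that]] dim[OF that] by simp
  assume no_hyperplane: "\<not> ?thesis"
  have "?A 0 \<subseteq> {0} \<union> (\<Union>i\<in>{1..h}. ?A i - {0})"
  proof
    fix z assume z: "z \<in> ?A 0"
    show "z \<in> {0} \<union> (\<Union>i\<in>{1..h}. ?A i - {0})"
    proof (cases "z = 0")
      case False
      moreover have "Us 0 \<subseteq> hyperplane z" using z by blast
      ultimately obtain i where "i \<in> {1..h}" "Us i \<subseteq> hyperplane z"
        using no_hyperplane by blast
      then show ?thesis using False by blast
    qed simp
  qed
  then have "card (?A 0) \<le> card ({0} \<union> (\<Union>i\<in>{1..h}. ?A i - {0}))" by (rule card_mono[rotated]) simp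
  also have "\<dots> \<le> card {0 :: 'a^'n} + card (\<Union>i\<in>{1..h}. ?A i - {0})"
    by (rule card_Un_le)
  also have "\<dots> \<le> 1 + (\<Sum>i=1..h. card (?A i - {0}))"
    using card_UN_le[of "{1..h}" "\<lambda>i. ?A i - {0}"] by simp
  also have "(\<Sum>i=1..h. card (?A i - {0})) = (\<Sum>i=1..h. ?q ^ (?n - u i) - 1)"
    using card_A by (intro sum.cong) auto
  also have "\<dots> \<le> (\<Sum>i=1..h. ?Q - 1)"
    using q by (intro sum_mono diff_le_mono power_increasing diff_le_mono2 u_min) auto
  finally have "card (?A 0) \<le> 1 + h * (?Q - 1)" by simp
  also have "\<dots> < h * ?Q"
  proof -
    have "h * (?Q - 1) = h * ?Q - h" by (simp add: diff_mult_distrib2)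
    moreover have "h \<le> h * ?Q" using q by simp
    ultimately show ?thesis using \<open>2 \<le> h\<close> by linarith
  qed
  also have "\<dots> \<le> ?q ^ (u 1 - u 0) * ?Q"
    using h_le by simp
  also have "\<dots> = ?q ^ (?n - u 0)"
  proof -
    have "u 1 \<le> ?n" using dim[of 1] dim_subset_UNIV_cart_gen[of "Us 1"] \<open>2 \<le> h\<close> by simp
    then have "(u 1 - u 0) + (?n - u 1) = ?n - u 0" using \<open>u 0 < u 1\<close> by simp
    then show ?thesis by (metis power_add)
  qed
  finally show False using card_A[of 0] by simp
qed

lemma min_dist_gen_code_eq:
  assumes weight_pos: "\<And>x. x \<noteq> 0 \<Longrightarrow> 0 < codeword_weight cols x"
    and z: "z \<noteq> 0" "Us 0 \<subseteq> hyperplane z" "\<forall>i\<in>{1..h}. \<not> Us i \<subseteq> hyperplane z"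
  shows "int (min_dist (gen_code cols)) =
           int CARD('a) ^ (CARD('n) - 1) - (\<Sum>i=1..h. int CARD('a) ^ (u i - 1))"
proof -
  have "min_dist (gen_code cols) = codeword_weight cols z"
  proof (rule min_dist_gen_code_eqI[OF cols_distinct refl weight_pos[OF z(1)]])
    show "codeword_weight cols z \<le> codeword_weight cols x" if "x \<noteq> 0" for x
      using codeword_weight_ge[OF that] codeword_weight_eq_if_kernel[OF z] by simp
  qed
  then show ?thesis using codeword_weight_eq_if_kernel[OF z] by simp
qed

end

theorem theorem3p2:
  fixes Us :: "nat \<Rightarrow> ('a::{finite,field} ^ 'n) set"
    and u :: "nat \<Rightarrow> nat" and h k :: nat
    and cols :: "('a ^ 'n) list"
  defines "q \<equiv> CARD('a)"
  assumes k_def: "CARD('n) = k" and k3: "k \<ge> 3" and h2: "h \<ge> 2"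
    and u0: "1 \<le> u 0" and u01: "u 0 < u 1"
    and umono: "\<forall>i. 1 \<le> i \<and> i < h \<longrightarrow> u i \<le> u (Suc i)"
    and subsp: "\<forall>i \<le> h. vec.subspace (Us i) \<and> vec.dim (Us i) = u i"
    and inter: "\<forall>i j. 1 \<le> i \<and> i \<le> h \<and> 1 \<le> j \<and> j \<le> h \<and> i \<noteq> j
                   \<longrightarrow> Us i \<inter> Us j = Us 0"
    and ineq: "int q ^ k - int q ^ (k - 1)
                 > int q ^ u 0 - 1 + (\<Sum>i=1..h. (int q ^ u i - int q ^ u 0))"
    and cols_dist: "distinct cols"
    and cols_sub: "set cols \<subseteq> {v. v \<noteq> 0 \<and> v \<notin> (\<Union>i\<in>{1..h}. Us i)}"
    and cols_rep: "\<forall>v. v \<noteq> 0 \<and> v \<notin> (\<Union>i\<in>{1..h}. Us i) \<longrightarrow>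
                     card {c \<in> set cols. \<exists>t. t \<noteq> 0 \<and> c = t *s v} = 1"
    and hle: "h \<le> q ^ (u 1 - u 0)"
  shows "real (length cols) =
           ((real q ^ k - real q ^ u 0) - (\<Sum>i=1..h. (real q ^ u i - real q ^ u 0))) / (real q - 1)
         \<and> card (gen_code cols) = q ^ k
         \<and> int (min_dist (gen_code cols)) = int q ^ (k - 1) - (\<Sum>i=1..h. int q ^ (u i - 1))"
proof -
  have kernel: "Us 0 \<subseteq> Us i" if "i \<in> {1..h}" for i
  proof -
    have "(if i = 1 then 2 else 1) \<in> {1..h}" "(if i = 1 then 2 else 1) \<noteq> i" using h2 by auto
    then show ?thesis using inter that by (metis atLeastAtMost_iff inf.cobounded1)
  qed
  interpret sunflower_complement_code Us u h cols
    using subsp kernel inter h2 cols_dist cols_sub cols_rep by unfold_locales auto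
  have u_min: "u 1 \<le> u i" if "i \<in> {1..h}" for i
    by (rule lift_Suc_mono_le_ivl[where N = "{1..<h}"]) (use that umono in auto)
  have weight_pos: "0 < codeword_weight cols x" if "x \<noteq> 0" for x
    using codeword_weight_pos[OF _ that] ineq k_def unfolding q_def by simp
  obtain z where z: "z \<noteq> 0" "Us 0 \<subseteq> hyperplane z" "\<forall>i\<in>{1..h}. \<not> Us i \<subseteq> hyperplane z"
    using ex_hyperplane_meeting_only_kernel h2 u01 u_min hle unfolding q_def by blast
  show ?thesis
    using length_cols_eq card_gen_code[OF weight_pos] min_dist_gen_code_eq[OF weight_pos z] k_def
    unfolding q_def by simp
qed

end
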